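(* Let $M=B\circ S$ and $x,x'\in\mathbb X$. Let $A_1,\dots,A_I$ and $E_1,\dots,E_J$ be two partitions of $\mathbb Y$ into disjoint sets such that $\Pr[S(x)\in A_i]>0$ for all $i$ and $\Pr[S(x')\in E_j]>0$ for all $j$. Let $\gamma$ be any coupling between the $I+J$ conditional pmfs $s_x(\cdot\mid A_1),\dots,s_x(\cdot\mid A_I),s_{x'}(\cdot\mid E_1),\dots,s_{x'}(\cdot\mid E_J)$, viewed as a pmf on tuples $(\mathbf y^{(1)},\mathbf y^{(2)})\in\mathbb Y^I\times\mathbb Y^J$. Then $$\Psi_\alpha(m_x\|m_{x'})\le\sum_{(\mathbf y^{(1)},\mathbf y^{(2)})\in\mathbb Y^{I+J}} c_\alpha(\mathbf y^{(1)},\mathbf y^{(2)})\,\gamma(\mathbf y^{(1)},\mathbf y^{(2)}),$$ where $$c_\alpha(\mathbf y^{(1)},\mathbf y^{(2)})=\Psi_\alpha\Big(\sum_{i=1}^I b_{y^{(1)}_i}\Pr[S(x)\in A_i]\ \Big\|\ \sum_{j=1}^J b_{y^{(2)}_j}\Pr[S(x')\in E_j]\Big).$$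
   Context: Setting: $\mathbb A$ is a finite set, the dataset space $\mathbb X\subseteq\mathcal P(\mathbb A)$, and $\mathbb Y$ is a finite batch space. A subsampling scheme $S$ assigns to each dataset $x$ a pmf $s_x$ on $\mathbb Y$; $\Pr[S(x)\in A]=\sum_{y\in A}s_x(y)$ and $s_x(y\mid A)=s_x(y)\mathbb 1[y\in A]/\Pr[S(x)\in A]$. A base mechanism $B$ assigns to each batch $y$ a probability density $b_y$ on $\mathbb R^D$. The subsampled mechanism $M=B\circ S$ has density $m_x(z)=\sum_{y}b_y(z)s_x(y)$. $H_\alpha(p\|q)=\int\max\{p-\alpha q,0\}dz$ ($\alpha\ge0$), $\Lambda_\alpha(p\|q)=\int p^\alpha q^{1-\alpha}dz$ ($\alpha>1$); $\Psi_\alpha$ denotes either $H_\alpha$ with $\alpha\ge0$ or $\Lambda_\alpha$ with $\alpha>1$. A coupling between pmfs $p_1,\dots,p_N$ on $\mathbb Y$ is a pmf on $\mathbb Y^N$ whose $n$-th marginal is $p_n$. *)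

theory Defs
  imports "HOL-Analysis.Analysis" "HOL-Probability.Probability"
begin

definition hockey_stick :: "real \<Rightarrow> ('e::euclidean_space \<Rightarrow> real) \<Rightarrow> ('e \<Rightarrow> real) \<Rightarrow> ennreal" where
  "hockey_stick \<alpha> p q = (\<integral>\<^sup>+ z. ennreal (max (p z - \<alpha> * q z) 0) \<partial>lborel)"

definition renyi_integrand :: "real \<Rightarrow> real \<Rightarrow> real \<Rightarrow> ennreal" where
  "renyi_integrand \<alpha> p q =
     (if p = 0 then 0 else if q = 0 then \<infinity> else ennreal (p powr \<alpha> * q powr (1 - \<alpha>)))"

definition renyi_lambda :: "real \<Rightarrow> ('e::euclidean_space \<Rightarrow> real) \<Rightarrow> ('e \<Rightarrow> real) \<Rightarrow> ennreal" where
  "renyi_lambda \<alpha> p q = (\<integral>\<^sup>+ z. renyi_integrand \<alpha> (p z) (q z) \<partial>lborel)"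

datatype div_kind = HockeyStick | RenyiLambda

definition valid_div :: "div_kind \<Rightarrow> real \<Rightarrow> bool" where
  "valid_div k \<alpha> = (case k of HockeyStick \<Rightarrow> \<alpha> \<ge> 0 | RenyiLambda \<Rightarrow> \<alpha> > 1)"

definition Psi :: "div_kind \<Rightarrow> real \<Rightarrow> ('e::euclidean_space \<Rightarrow> real) \<Rightarrow> ('e \<Rightarrow> real) \<Rightarrow> ennreal" where
  "Psi k \<alpha> p q = (case k of HockeyStick \<Rightarrow> hockey_stick \<alpha> p q | RenyiLambda \<Rightarrow> renyi_lambda \<alpha> p q)"

definition mech_density :: "('a set \<Rightarrow> 'y::finite pmf) \<Rightarrow> ('y \<Rightarrow> 'e \<Rightarrow> real) \<Rightarrow> 'a set \<Rightarrow> 'e \<Rightarrow> real" where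
  "mech_density S b x z = (\<Sum>y\<in>UNIV. b y z * pmf (S x) y)"

definition is_density :: "('e::euclidean_space \<Rightarrow> real) \<Rightarrow> bool" where
  "is_density f \<longleftrightarrow> f \<in> borel_measurable lborel \<and> (\<forall>z. f z \<ge> 0) \<and> (\<integral>\<^sup>+ z. ennreal (f z) \<partial>lborel) = 1"

definition is_partition :: "nat \<Rightarrow> (nat \<Rightarrow> 'y set) \<Rightarrow> bool" where
  "is_partition I A \<longleftrightarrow> (\<forall>i<I. \<forall>j<I. i \<noteq> j \<longrightarrow> A i \<inter> A j = {}) \<and> (\<Union>i<I. A i) = UNIV"

end

theory Submission
  imports Defs
begin

text \<open>Both divergences are integrals of a pointwise integrand that is jointly convex and positively
  homogeneous, hence subadditive on mixtures: if both densities are written as the same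
  \<open>\<gamma>\<close>-mixture \<open>m\<^sub>x = \<Sum>\<^sub>c \<gamma> c \<cdot> P\<^sub>c\<close>, \<open>m\<^sub>x' = \<Sum>\<^sub>c \<gamma> c \<cdot> Q\<^sub>c\<close>, then
  \<open>\<Psi>(m\<^sub>x \<parallel> m\<^sub>x') \<le> \<Sum>\<^sub>c \<gamma> c \<cdot> \<Psi>(P\<^sub>c \<parallel> Q\<^sub>c)\<close>.
  Such a representation comes from the coupling: splitting \<open>s\<^sub>x\<close> along the partition gives
  \<open>m\<^sub>x = \<Sum>\<^sub>i Pr[S(x) \<in> A\<^sub>i] \<cdot> \<bbbE>[b\<^sub>y | y \<sim> s\<^sub>x(\<cdot> | A\<^sub>i)]\<close>, and each conditional pmf is a
  marginal of \<open>\<gamma>\<close>, so the expectations can all be taken jointly over \<open>\<gamma>\<close>.\<close>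

lemma powr_perspective_sum_le:
  fixes w p q :: "'k \<Rightarrow> real"
  assumes fin: "finite K" and ne: "K \<noteq> {}"
    and pos: "\<And>k. k \<in> K \<Longrightarrow> w k > 0 \<and> p k > 0 \<and> q k > 0" and a: "\<alpha> \<ge> 1"
  shows "(\<Sum>k\<in>K. w k * p k) powr \<alpha> * (\<Sum>k\<in>K. w k * q k) powr (1 - \<alpha>)
         \<le> (\<Sum>k\<in>K. w k * (p k powr \<alpha> * q k powr (1 - \<alpha>)))"
proof -
  define P where "P = (\<Sum>k\<in>K. w k * p k)"
  define Q where "Q = (\<Sum>k\<in>K. w k * q k)"
  define R where "R = (\<Sum>k\<in>K. w k * (p k powr \<alpha> * q k powr (1 - \<alpha>)))"
  have Ppos: "P > 0" and Qpos: "Q > 0"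
    unfolding P_def Q_def using fin ne pos by (auto intro!: sum_pos)
  \<comment> \<open>Jensen for \<open>t \<mapsto> t powr \<alpha>\<close> at the ratios \<open>p k / q k\<close> with weights \<open>w k \<cdot> q k / Q\<close>.\<close>
  define l where "l k = w k * q k / Q" for k
  define t where "t k = p k / q k" for k
  have l_sum: "(\<Sum>k\<in>K. l k) = 1"
    unfolding l_def Q_def using Qpos by (simp add: sum_divide_distrib[symmetric] Q_def)
  have mean: "(\<Sum>k\<in>K. l k *\<^sub>R t k) = P / Q"
    unfolding l_def t_def P_def sum_divide_distrib using pos by (intro sum.cong) (auto, metis less_irrefl)
  have summand: "l k * t k powr \<alpha> = w k * (p k powr \<alpha> * q k powr (1 - \<alpha>)) / Q" if "k \<in> K" for k
  proof -
    have qk: "q k > 0" using pos that by auto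
    then have "q k powr (1 - \<alpha>) = q k / q k powr \<alpha>" by (simp add: powr_diff)
    with qk Qpos show ?thesis unfolding l_def t_def by (simp add: powr_divide field_simps)
  qed
  have "(P / Q) powr \<alpha> \<le> (\<Sum>k\<in>K. l k * t k powr \<alpha>)"
    unfolding mean[symmetric] using fin ne l_sum pos Qpos
    by (intro convex_on_sum[OF _ _ powr_convex[OF a]]) (auto simp: l_def t_def dest!: pos)
  also have "\<dots> = R / Q"
    unfolding R_def by (simp add: summand sum_divide_distrib)
  finally have "Q * (P powr \<alpha> / Q powr \<alpha>) \<le> R"
    using Ppos Qpos by (simp add: powr_divide field_simps)
  moreover have "Q * (P powr \<alpha> / Q powr \<alpha>) = P powr \<alpha> * Q powr (1 - \<alpha>)"
    using Qpos by (simp add: powr_diff)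
  ultimately show ?thesis unfolding P_def Q_def R_def by simp
qed

lemma hockey_stick_integrand_sum_le:
  fixes w p q :: "'k \<Rightarrow> real"
  assumes w: "\<And>k. k \<in> K \<Longrightarrow> w k \<ge> 0"
  shows "ennreal (max ((\<Sum>k\<in>K. w k * p k) - \<alpha> * (\<Sum>k\<in>K. w k * q k)) 0)
    \<le> (\<Sum>k\<in>K. ennreal (w k) * ennreal (max (p k - \<alpha> * q k) 0))"
proof -
  have "(\<Sum>k\<in>K. w k * p k) - \<alpha> * (\<Sum>k\<in>K. w k * q k) = (\<Sum>k\<in>K. w k * (p k - \<alpha> * q k))"
    by (simp add: sum_distrib_left sum_subtractf algebra_simps)
  also have "\<dots> \<le> (\<Sum>k\<in>K. w k * max (p k - \<alpha> * q k) 0)"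
    using w by (intro sum_mono mult_left_mono) auto
  finally have "ennreal (max ((\<Sum>k\<in>K. w k * p k) - \<alpha> * (\<Sum>k\<in>K. w k * q k)) 0)
      \<le> ennreal (\<Sum>k\<in>K. w k * max (p k - \<alpha> * q k) 0)"
    using w by (intro ennreal_leI) (auto intro: sum_nonneg)
  also have "\<dots> = (\<Sum>k\<in>K. ennreal (w k) * ennreal (max (p k - \<alpha> * q k) 0))"
    using w by (simp add: sum_ennreal[symmetric] ennreal_mult)
  finally show ?thesis .
qed

lemma renyi_integrand_antimono:
  assumes "\<alpha> > 1" "0 \<le> q" "q \<le> q'"
  shows "renyi_integrand \<alpha> p q' \<le> renyi_integrand \<alpha> p q"
  using assms by (auto simp: renyi_integrand_def intro!: ennreal_leI mult_left_mono powr_mono2')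

lemma renyi_integrand_pos:
  assumes "p > 0" "q > 0"
  shows "renyi_integrand \<alpha> p q = ennreal (p powr \<alpha> * q powr (1 - \<alpha>))"
  using assms by (simp add: renyi_integrand_def)

lemma renyi_integrand_sum_le:
  fixes w p q :: "'k \<Rightarrow> real"
  assumes fin: "finite K" and nn: "\<And>k. k \<in> K \<Longrightarrow> w k \<ge> 0 \<and> p k \<ge> 0 \<and> q k \<ge> 0"
    and a: "\<alpha> > 1"
  shows "renyi_integrand \<alpha> (\<Sum>k\<in>K. w k * p k) (\<Sum>k\<in>K. w k * q k)
    \<le> (\<Sum>k\<in>K. ennreal (w k) * renyi_integrand \<alpha> (p k) (q k))"
proof (cases "\<exists>k\<in>K. w k > 0 \<and> p k > 0 \<and> q k = 0")
  case True
  then obtain k where k: "k \<in> K" "w k > 0" "p k > 0" "q k = 0" by auto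
  then have "\<infinity> = ennreal (w k) * renyi_integrand \<alpha> (p k) (q k)"
    by (simp add: renyi_integrand_def ennreal_mult_top)
  also have "\<dots> \<le> (\<Sum>k\<in>K. ennreal (w k) * renyi_integrand \<alpha> (p k) (q k))"
    using fin k(1) by (intro member_le_sum) auto
  finally show ?thesis by (simp add: top_unique)
next
  case False
  \<comment> \<open>Only the terms with \<open>w k \<cdot> p k > 0\<close> matter; dropping the others can only decrease the
    second argument, which increases the integrand.\<close>
  define L where "L = {k\<in>K. w k > 0 \<and> p k > 0}"
  have finL: "finite L" using fin by (simp add: L_def)
  have posL: "w k > 0 \<and> p k > 0 \<and> q k > 0" if "k \<in> L" for k
    using False nn[of k] that by (auto simp: L_def less_le)
  have P_eq: "(\<Sum>k\<in>K. w k * p k) = (\<Sum>k\<in>L. w k * p k)"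
    unfolding L_def using fin nn by (intro sum.mono_neutral_right) (auto simp: less_le)
  have Q_le: "(\<Sum>k\<in>L. w k * q k) \<le> (\<Sum>k\<in>K. w k * q k)"
    unfolding L_def using fin nn by (intro sum_mono2) auto
  show ?thesis
  proof (cases "L = {}")
    case True
    then show ?thesis using P_eq by (simp add: renyi_integrand_def)
  next
    case ne: False
    have PL: "(\<Sum>k\<in>L. w k * p k) > 0" and QL: "(\<Sum>k\<in>L. w k * q k) > 0"
      using finL ne posL by (auto intro!: sum_pos)
    have "renyi_integrand \<alpha> (\<Sum>k\<in>K. w k * p k) (\<Sum>k\<in>K. w k * q k)
        \<le> renyi_integrand \<alpha> (\<Sum>k\<in>L. w k * p k) (\<Sum>k\<in>L. w k * q k)"
      unfolding P_eq using a QL Q_le by (intro renyi_integrand_antimono) auto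
    also have "\<dots> \<le> ennreal (\<Sum>k\<in>L. w k * (p k powr \<alpha> * q k powr (1 - \<alpha>)))"
      using a PL QL by (auto simp: renyi_integrand_pos intro!: ennreal_leI powr_perspective_sum_le finL ne posL)
    also have "\<dots> = (\<Sum>k\<in>L. ennreal (w k) * renyi_integrand \<alpha> (p k) (q k))"
    proof -
      have "ennreal (w k * (p k powr \<alpha> * q k powr (1 - \<alpha>)))
          = ennreal (w k) * renyi_integrand \<alpha> (p k) (q k)" if "k \<in> L" for k
        using posL[OF that] by (simp add: renyi_integrand_pos ennreal_mult)
      moreover have "0 \<le> w k * (p k powr \<alpha> * q k powr (1 - \<alpha>))" if "k \<in> L" for k
        using posL[OF that] by simp
      ultimately show ?thesis by (subst sum_ennreal[symmetric]) (auto intro!: sum.cong)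
    qed
    also have "\<dots> \<le> (\<Sum>k\<in>K. ennreal (w k) * renyi_integrand \<alpha> (p k) (q k))"
      using fin by (intro sum_mono2) (auto simp: L_def)
    finally show ?thesis .
  qed
qed

definition Psi_integrand :: "div_kind \<Rightarrow> real \<Rightarrow> real \<Rightarrow> real \<Rightarrow> ennreal" where
  "Psi_integrand k \<alpha> p q = (case k of HockeyStick \<Rightarrow> ennreal (max (p - \<alpha> * q) 0)
     | RenyiLambda \<Rightarrow> renyi_integrand \<alpha> p q)"

lemma Psi_eq_nn_integral: "Psi k \<alpha> p q = (\<integral>\<^sup>+ z. Psi_integrand k \<alpha> (p z) (q z) \<partial>lborel)"
  by (cases k) (simp_all add: Psi_def Psi_integrand_def hockey_stick_def renyi_lambda_def)

lemma Psi_integrand_sum_le: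
  fixes w p q :: "'k \<Rightarrow> real"
  assumes "finite K" and "\<And>k. k \<in> K \<Longrightarrow> w k \<ge> 0 \<and> p k \<ge> 0 \<and> q k \<ge> 0" and "valid_div k \<alpha>"
  shows "Psi_integrand k \<alpha> (\<Sum>c\<in>K. w c * p c) (\<Sum>c\<in>K. w c * q c)
    \<le> (\<Sum>c\<in>K. ennreal (w c) * Psi_integrand k \<alpha> (p c) (q c))"
  using assms hockey_stick_integrand_sum_le[of K w p \<alpha> q] renyi_integrand_sum_le[of K w p q \<alpha>]
  by (cases k) (auto simp: Psi_integrand_def valid_div_def)

lemma borel_measurable_Psi_integrand [measurable]:
  fixes p q :: "'e::euclidean_space \<Rightarrow> real"
  assumes [measurable]: "p \<in> borel_measurable lborel" "q \<in> borel_measurable lborel"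
  shows "(\<lambda>z. Psi_integrand k \<alpha> (p z) (q z)) \<in> borel_measurable lborel"
  by (cases k) (simp_all add: Psi_integrand_def renyi_integrand_def)

lemma Psi_mixture_le:
  fixes w :: "'c \<Rightarrow> real" and P Q :: "'c \<Rightarrow> 'e::euclidean_space \<Rightarrow> real"
  assumes fin: "finite K" and w: "\<And>c. c \<in> K \<Longrightarrow> w c \<ge> 0"
    and meas: "\<And>c. c \<in> K \<Longrightarrow> P c \<in> borel_measurable lborel \<and> Q c \<in> borel_measurable lborel"
    and nn: "\<And>c z. c \<in> K \<Longrightarrow> P c z \<ge> 0 \<and> Q c z \<ge> 0"
    and v: "valid_div k \<alpha>"
  shows "Psi k \<alpha> (\<lambda>z. \<Sum>c\<in>K. w c * P c z) (\<lambda>z. \<Sum>c\<in>K. w c * Q c z)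
    \<le> (\<Sum>c\<in>K. ennreal (w c) * Psi k \<alpha> (P c) (Q c))"
proof -
  have "Psi k \<alpha> (\<lambda>z. \<Sum>c\<in>K. w c * P c z) (\<lambda>z. \<Sum>c\<in>K. w c * Q c z)
      \<le> (\<integral>\<^sup>+ z. (\<Sum>c\<in>K. ennreal (w c) * Psi_integrand k \<alpha> (P c z) (Q c z)) \<partial>lborel)"
    unfolding Psi_eq_nn_integral using fin w nn v by (intro nn_integral_mono Psi_integrand_sum_le) auto
  also have "\<dots> = (\<Sum>c\<in>K. \<integral>\<^sup>+ z. ennreal (w c) * Psi_integrand k \<alpha> (P c z) (Q c z) \<partial>lborel)"
    using meas by (intro nn_integral_sum borel_measurable_times_ennreal borel_measurable_Psi_integrand) auto
  also have "\<dots> = (\<Sum>c\<in>K. ennreal (w c) * Psi k \<alpha> (P c) (Q c))"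
    using meas by (intro sum.cong refl) (simp add: Psi_eq_nn_integral nn_integral_cmult[OF borel_measurable_Psi_integrand])
  finally show ?thesis .
qed

lemma prob_times_cond_pmf_sum:
  fixes p :: "'y::finite pmf"
  assumes "measure_pmf.prob p A > 0"
  shows "measure_pmf.prob p A * (\<Sum>y\<in>UNIV. pmf (cond_pmf p A) y * g y) = (\<Sum>y\<in>A. g y * pmf p y)"
proof -
  have "set_pmf p \<inter> A \<noteq> {}" using assms measure_pmf_zero_iff[of p A] by auto
  then have "(\<Sum>y\<in>UNIV. pmf (cond_pmf p A) y * g y)
      = (\<Sum>y\<in>UNIV. if y \<in> A then pmf p y / measure_pmf.prob p A * g y else 0)"
    by (intro sum.cong) (auto simp: pmf_cond)
  also have "\<dots> = (\<Sum>y\<in>A. pmf p y / measure_pmf.prob p A * g y)"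
    by (simp add: sum.If_cases)
  finally show ?thesis using assms by (simp add: sum_distrib_left field_simps)
qed

lemma sum_partition:
  assumes "is_partition I A"
  shows "(\<Sum>y\<in>UNIV. g y) = (\<Sum>i<I. \<Sum>y\<in>A i. g (y::'y::finite))"
  using assms sum.UNION_disjoint[of "{..<I}" A g] by (simp add: is_partition_def)

lemma sum_pmf_eq_coupling_mixture:
  fixes p :: "'y::finite pmf" and \<gamma> :: "'c pmf" and f :: "'c \<Rightarrow> 'y list"
  assumes fin: "finite K" and sub: "set_pmf \<gamma> \<subseteq> K"
    and part: "is_partition I A"
    and pos: "\<forall>i<I. measure_pmf.prob p (A i) > 0"
    and marg: "\<forall>i<I. map_pmf (\<lambda>c. f c ! i) \<gamma> = cond_pmf p (A i)"
  shows "(\<Sum>y\<in>UNIV. g y * pmf p y) = (\<Sum>c\<in>K. pmf \<gamma> c * (\<Sum>i<I. g (f c ! i) * measure_pmf.prob p (A i)))"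
proof -
  have marginal: "(\<Sum>c\<in>K. pmf \<gamma> c * g (f c ! i)) = (\<Sum>y\<in>UNIV. pmf (cond_pmf p (A i)) y * g y)"
    if "i < I" for i
  proof -
    have "(\<Sum>c\<in>K. pmf \<gamma> c * g (f c ! i)) = measure_pmf.expectation \<gamma> (\<lambda>c. g (f c ! i))"
      using sub by (subst integral_measure_pmf[OF fin]) auto
    also have "\<dots> = measure_pmf.expectation (map_pmf (\<lambda>c. f c ! i) \<gamma>) g"
      by simp
    also have "\<dots> = (\<Sum>y\<in>UNIV. pmf (cond_pmf p (A i)) y * g y)"
      using marg that by (simp add: integral_measure_pmf[of UNIV])
    finally show ?thesis .
  qed
  have "(\<Sum>y\<in>UNIV. g y * pmf p y) = (\<Sum>i<I. \<Sum>y\<in>A i. g y * pmf p y)"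
    by (rule sum_partition[OF part])
  also have "\<dots> = (\<Sum>i<I. measure_pmf.prob p (A i) * (\<Sum>c\<in>K. pmf \<gamma> c * g (f c ! i)))"
    using pos by (simp add: marginal prob_times_cond_pmf_sum)
  also have "\<dots> = (\<Sum>c\<in>K. pmf \<gamma> c * (\<Sum>i<I. g (f c ! i) * measure_pmf.prob p (A i)))"
    by (simp add: sum_distrib_left mult_ac sum.swap[of _ "{..<I}"])
  finally show ?thesis .
qed

lemma finite_lists_pairs_length_eq:
  "finite {(u, v). length (u :: 'y::finite list) = I \<and> length (v :: 'y list) = J}"
proof -
  have "{(u, v). length (u :: 'y list) = I \<and> length (v :: 'y list) = J}
      = {u. set u \<subseteq> UNIV \<and> length u = I} \<times> {v. set v \<subseteq> UNIV \<and> length v = J}"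
    by auto
  then show ?thesis by (simp only:) (intro finite_cartesian_product finite_lists_length_eq; simp)
qed

theorem theorem3p4:
  fixes \<A> :: "'a set" and \<X> :: "'a set set"
    and S :: "'a set \<Rightarrow> 'y::finite pmf"
    and b :: "'y \<Rightarrow> real^'d \<Rightarrow> real"
    and x x' :: "'a set"
    and I J :: nat and A E :: "nat \<Rightarrow> 'y set"
    and \<gamma> :: "('y list \<times> 'y list) pmf"
    and k :: div_kind and \<alpha> :: real
  assumes "finite \<A>" and "\<X> \<subseteq> Pow \<A>" and "x \<in> \<X>" and "x' \<in> \<X>"
    and "\<forall>y. is_density (b y)"
    and "is_partition I A" and "is_partition J E"
    and "\<forall>i<I. measure_pmf.prob (S x) (A i) > 0"
    and "\<forall>j<J. measure_pmf.prob (S x') (E j) > 0"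
    and "set_pmf \<gamma> \<subseteq> {(u, v). length u = I \<and> length v = J}"
    and "\<forall>i<I. map_pmf (\<lambda>(u, v). u ! i) \<gamma> = cond_pmf (S x) (A i)"
    and "\<forall>j<J. map_pmf (\<lambda>(u, v). v ! j) \<gamma> = cond_pmf (S x') (E j)"
    and "valid_div k \<alpha>"
  shows "Psi k \<alpha> (mech_density S b x) (mech_density S b x') \<le>
    (\<Sum>(u, v)\<in>{(u, v). length u = I \<and> length v = J}.
        Psi k \<alpha> (\<lambda>z. \<Sum>i<I. b (u ! i) z * measure_pmf.prob (S x) (A i))
                 (\<lambda>z. \<Sum>j<J. b (v ! j) z * measure_pmf.prob (S x') (E j))
        * ennreal (pmf \<gamma> (u, v)))"
proof -
  define K where "K = {(u :: 'y list, v :: 'y list). length u = I \<and> length v = J}"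
  define P where "P (c :: 'y list \<times> 'y list) z = (\<Sum>i<I. b (fst c ! i) z * measure_pmf.prob (S x) (A i))" for c z
  define Q where "Q (c :: 'y list \<times> 'y list) z = (\<Sum>j<J. b (snd c ! j) z * measure_pmf.prob (S x') (E j))" for c z
  have fin: "finite K" unfolding K_def by (rule finite_lists_pairs_length_eq)
  have sub: "set_pmf \<gamma> \<subseteq> K" using assms(10) by (simp add: K_def)
  have b: "b y \<in> borel_measurable lborel" "b y z \<ge> 0" for y z
    using assms(5) by (auto simp: is_density_def)
  have "mech_density S b x = (\<lambda>z. \<Sum>c\<in>K. pmf \<gamma> c * P c z)"
    using assms(11) unfolding mech_density_def P_def
    by (intro ext sum_pmf_eq_coupling_mixture[OF fin sub assms(6,8)]) (simp add: split_beta')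
  moreover have "mech_density S b x' = (\<lambda>z. \<Sum>c\<in>K. pmf \<gamma> c * Q c z)"
    using assms(12) unfolding mech_density_def Q_def
    by (intro ext sum_pmf_eq_coupling_mixture[OF fin sub assms(7,9)]) (simp add: split_beta')
  ultimately have "Psi k \<alpha> (mech_density S b x) (mech_density S b x')
      \<le> (\<Sum>c\<in>K. ennreal (pmf \<gamma> c) * Psi k \<alpha> (P c) (Q c))"
    using fin b assms(13) unfolding P_def Q_def
    by (simp only:) (rule Psi_mixture_le; auto intro!: sum_nonneg)
  then show ?thesis
    unfolding K_def P_def Q_def by (simp add: case_prod_beta' mult.commute)
qed

end
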